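(* There exist a comparable abstract numeration system $\mathcal{S}$ and an $\mathcal{S}$-automatic infinite word $\mathbf{x}$ such that the winning shift $W(X)$ of the orbit closure $X$ of $\mathbf{x}$ has infinite coding dimension.
   Context: ANS: $\mathcal{S}=(L,\prec)$ with $L$ an infinite language and $\prec$ a total order on $L$ of order type $\omega$; $\mathrm{rep}(n)$ is the $n$-th word of $L$; tuples are represented by left-padding component representations with a new symbol $\#$ to equal length; $Y\subseteq\mathbb{N}^d$ is $\mathcal{S}$-recognizable if $\mathrm{rep}(Y)$ is regular. $\mathcal{S}$ is comparable if $\{(x,y):x\le y\}$ is $\mathcal{S}$-recognizable. $\mathbf{x}$ is $\mathcal{S}$-automatic if a DFA with output outputs $\mathbf{x}[n]$ on input $\mathrm{rep}(n)$ for all $n\ge0$. Winning shift: for $X\subseteq A^{\mathbb{N}}$ and a choice sequence $\alpha\in\{0,\dots,|A|-1\}^{\mathbb{N}}$, Alice and Bob play infinitely many rounds; in round $j$ Alice chooses $A_j\subseteq A$ with $|A_j|=\alpha_j+1$ and Bob chooses $a_j\in A_j$; Alice wins if $a_0a_1\cdots\in X$. $W(X)$ is the set of $\alpha$ for which Alice has a winning strategy. Infinite coding dimension: no $d$ bounds $\sum_iy_i$ over $\mathbf{y}\in W(X)$. *)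

theory Defs
  imports "HOL-Analysis.Analysis"
begin

definition regular_lang :: "'a list set \<Rightarrow> bool" where
  "regular_lang Lg \<longleftrightarrow>
     (\<exists>(Gam :: 'a set) (Q :: nat set) (delta :: nat \<Rightarrow> 'a \<Rightarrow> nat) q0 F.
        finite Gam \<and> finite Q \<and> q0 \<in> Q \<and> F \<subseteq> Q \<and>
        (\<forall>q\<in>Q. \<forall>c\<in>Gam. delta q c \<in> Q) \<and>
        Lg = {w \<in> lists Gam. foldl delta q0 w \<in> F})"

definition is_ANS :: "nat set \<Rightarrow> nat list set \<Rightarrow> (nat list \<Rightarrow> nat list \<Rightarrow> bool) \<Rightarrow> bool" where
  "is_ANS Alph Lang lt \<longleftrightarrow>
     finite Alph \<and> Lang \<subseteq> lists Alph \<and> infinite Lang \<and>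
     (\<exists>f. bij_betw f UNIV Lang \<and> (\<forall>m n::nat. m < n \<longleftrightarrow> lt (f m) (f n)))"

definition ans_rep :: "nat list set \<Rightarrow> (nat list \<Rightarrow> nat list \<Rightarrow> bool) \<Rightarrow> nat \<Rightarrow> nat list" where
  "ans_rep Lang lt n = (THE w. w \<in> Lang \<and> card {v \<in> Lang. lt v w} = n)"

text \<open>Left padding with the new symbol # (encoded as None).\<close>

definition pad_left :: "nat \<Rightarrow> nat list \<Rightarrow> nat option list" where
  "pad_left m w = replicate (m - length w) None @ map Some w"

text \<open>Representation of a tuple (given as a list of components): the components'
  representations are left-padded to a common length and read in parallel.\<close>

definition rep_tuple :: "nat list set \<Rightarrow> (nat list \<Rightarrow> nat list \<Rightarrow> bool) \<Rightarrow> nat list \<Rightarrow> nat option list list" where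
  "rep_tuple Lang lt xs =
     (let ws = map (ans_rep Lang lt) xs;
          m = foldr max (map length ws) 0
      in map (\<lambda>i. map (\<lambda>w. pad_left m w ! i) ws) [0..<m])"

definition S_recognizable :: "nat list set \<Rightarrow> (nat list \<Rightarrow> nat list \<Rightarrow> bool) \<Rightarrow> nat list set \<Rightarrow> bool" where
  "S_recognizable Lang lt Y \<longleftrightarrow> regular_lang (rep_tuple Lang lt ` Y)"

definition S_comparable :: "nat list set \<Rightarrow> (nat list \<Rightarrow> nat list \<Rightarrow> bool) \<Rightarrow> bool" where
  "S_comparable Lang lt \<longleftrightarrow> S_recognizable Lang lt {[x, y] | x y. x \<le> y}"

definition S_automatic :: "nat set \<Rightarrow> nat list set \<Rightarrow> (nat list \<Rightarrow> nat list \<Rightarrow> bool) \<Rightarrow> (nat \<Rightarrow> nat) \<Rightarrow> bool" where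
  "S_automatic Alph Lang lt x \<longleftrightarrow>
     (\<exists>(Q :: nat set) (delta :: nat \<Rightarrow> nat \<Rightarrow> nat) q0 (tau :: nat \<Rightarrow> nat).
        finite Q \<and> q0 \<in> Q \<and> (\<forall>q\<in>Q. \<forall>c\<in>Alph. delta q c \<in> Q) \<and>
        (\<forall>n. x n = tau (foldl delta q0 (ans_rep Lang lt n))))"

definition orbit_closure :: "(nat \<Rightarrow> nat) \<Rightarrow> (nat \<Rightarrow> nat) set" where
  "orbit_closure x = closure (range (\<lambda>k i. x (k + i)))"

text \<open>Winning shift W(X) over alphabet A. Alice's strategy maps the history of Bob's
  moves a_0 .. a_(j-1) to the set A_j.\<close>

definition winning_shift :: "nat set \<Rightarrow> (nat \<Rightarrow> nat) set \<Rightarrow> (nat \<Rightarrow> nat) set" where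
  "winning_shift A X =
     {alpha. (\<forall>j. alpha j < card A) \<and>
        (\<exists>sigma :: nat list \<Rightarrow> nat set.
           (\<forall>h. sigma h \<subseteq> A \<and> card (sigma h) = alpha (length h) + 1) \<and>
           (\<forall>a. (\<forall>j. a j \<in> sigma (map a [0..<j])) \<longrightarrow> a \<in> X))}"

definition infinite_coding_dimension :: "(nat \<Rightarrow> nat) set \<Rightarrow> bool" where
  "infinite_coding_dimension W \<longleftrightarrow> (\<forall>d::nat. \<exists>y\<in>W. \<exists>n. d < (\<Sum>i<n. y i))"

end

theory Submission
  imports Defs "HOL-Library.Countable"
begin

(* A letter c in {0..3} carries a track bit c mod 2 and a mark bit c div 2. The numeration
   language consists of the words with exactly one mark, ordered by length, then by track,
   then by the position of the mark. For every binary word b of length n the n words with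
   track b are then consecutive, the mark moving from right to left, so the automaton that
   outputs the track bit under the mark writes b reversed there. Hence every binary word is a
   factor of the automatic word, its orbit closure is the full shift on {0,1}, and Alice wins
   with the constant choice sequence 1, which gives infinite coding dimension. The order is
   a lexicographic comparison of tracks and marks, which a finite automaton can carry out
   while reading two padded representations in parallel. *)

lemma regular_lang_countable_dfa:
  fixes delta :: "'s::countable \<Rightarrow> 'a \<Rightarrow> 's"
  assumes "finite Gam" "finite Q" "q0 \<in> Q" "F \<subseteq> Q"
    and "\<forall>q\<in>Q. \<forall>c\<in>Gam. delta q c \<in> Q"
    and "Lg = {w \<in> lists Gam. foldl delta q0 w \<in> F}"
  shows "regular_lang Lg"
proof -
  define d where "d n c = to_nat (delta (from_nat n) c)" for n c
  have fold_d: "foldl d (to_nat q) w = to_nat (foldl delta q w)" for q w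
    by (induction w arbitrary: q) (auto simp: d_def)
  show ?thesis
    unfolding regular_lang_def
  proof (intro exI conjI)
    show "finite Gam" "finite (to_nat ` Q)" "to_nat q0 \<in> to_nat ` Q" "to_nat ` F \<subseteq> to_nat ` Q"
      using assms by auto
    show "\<forall>q\<in>to_nat ` Q. \<forall>c\<in>Gam. d q c \<in> to_nat ` Q"
      using assms(5) by (auto simp: d_def)
    show "Lg = {w \<in> lists Gam. foldl d (to_nat q0) w \<in> to_nat ` F}"
      unfolding fold_d assms(6) by (auto simp: inj_image_mem_iff)
  qed
qed

locale key_ordered_language =
  fixes key :: "nat list \<Rightarrow> nat" and S :: "nat list set"
  assumes inj_on_key: "inj_on key S" and infinite_carrier: "infinite S"
begin

definition enum :: "nat \<Rightarrow> nat list" where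
  "enum n = the_inv_into S key (enumerate (key ` S) n)"

lemma infinite_keys: "infinite (key ` S)"
  using inj_on_key infinite_carrier finite_image_iff by blast

lemma bij_enum: "bij_betw enum UNIV S"
proof -
  have "bij_betw key S (key ` S)"
    using inj_on_key by (simp add: bij_betw_def)
  then show ?thesis
    unfolding enum_def[abs_def]
    using bij_betw_trans[OF bij_enumerate[OF infinite_keys] bij_betw_the_inv_into]
    by (simp add: comp_def)
qed

lemma enum_in: "enum n \<in> S"
  using bij_enum bij_betwE by blast

lemma enum_surj: "w \<in> S \<Longrightarrow> \<exists>i. enum i = w"
  using bij_enum by (metis bij_betw_def imageE)

lemma key_enum: "key (enum n) = enumerate (key ` S) n"
  unfolding enum_def
  by (rule f_the_inv_into_f[OF inj_on_key]) (use enumerate_in_set[OF infinite_keys] in blast)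

lemma key_enum_less_iff: "key (enum m) < key (enum n) \<longleftrightarrow> m < n"
  by (simp add: key_enum infinite_keys)

lemma key_enum_le_iff: "key (enum m) \<le> key (enum n) \<longleftrightarrow> m \<le> n"
  by (simp add: key_enum infinite_keys)

lemma predecessors_enum: "{v \<in> S. key v < key (enum n)} = enum ` {..<n}"
  using enum_in key_enum_less_iff by (auto dest: enum_surj)

lemma ans_rep_eq_enum: "ans_rep S (\<lambda>v w. key v < key w) n = enum n"
proof -
  have "inj enum"
    using bij_enum by (simp add: bij_betw_def)
  then have card_pred: "card {v \<in> S. key v < key (enum m)} = m" for m
    by (simp add: predecessors_enum card_image inj_on_subset)
  show ?thesis
    unfolding ans_rep_def
    by (rule the_equality) (use enum_in card_pred enum_surj in metis)+
qed

lemma is_ANS_key_order: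
  assumes "finite Alph" "S \<subseteq> lists Alph"
  shows "is_ANS Alph S (\<lambda>v w. key v < key w)"
  unfolding is_ANS_def
  using assms infinite_carrier bij_enum key_enum_less_iff by blast

lemma enum_Suc_if_no_key_between:
  assumes "enum i = v" "w \<in> S" "key v < key w"
    and "\<not> (\<exists>u\<in>S. key v < key u \<and> key u < key w)"
  shows "enum (Suc i) = w"
proof -
  obtain j where j: "enum j = w" using enum_surj assms(2) by blast
  then have "i < j" using assms(1,3) key_enum_less_iff by blast
  moreover have "\<not> Suc i < j"
    using assms(1,4) j enum_in key_enum_less_iff lessI by metis
  ultimately have "j = Suc i" by simp
  with j show ?thesis by simp
qed

end

lemma in_orbit_closureI:
  assumes "\<And>M. \<exists>K. \<forall>j<M. x (K + j) = a j"
  shows "a \<in> orbit_closure x"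
proof -
  obtain K where K: "\<And>M j. j < M \<Longrightarrow> x (K M + j) = a j"
    using assms by metis
  define shifted where "shifted M = (\<lambda>i. x (K M + i))" for M
  have "((\<lambda>M. shifted M i) \<longlongrightarrow> a i) sequentially" for i
    by (rule tendsto_eventually)
      (auto simp: eventually_sequentially shifted_def intro!: exI[of _ "Suc i"] K)
  then have "limitin (product_topology (\<lambda>i. euclidean) UNIV) shifted a sequentially"
    unfolding limitin_componentwise by simp
  then have "(shifted \<longlongrightarrow> a) sequentially"
    by (simp add: euclidean_product_topology)
  moreover have "shifted M \<in> closure (range (\<lambda>k i. x (k + i)))" for M
    unfolding shifted_def by (rule subsetD[OF closure_subset]) (rule rangeI)
  ultimately show ?thesis
    unfolding orbit_closure_def by (intro Lim_in_closed_set[OF closed_closure]) auto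
qed

lemma full_choice_in_winning_shift:
  assumes "finite A" "A \<noteq> {}" and full: "\<And>a. range a \<subseteq> A \<Longrightarrow> a \<in> X"
  shows "(\<lambda>_. card A - 1) \<in> winning_shift A X"
proof -
  have "0 < card A" using assms(1,2) by (simp add: card_gt_0_iff)
  then show ?thesis
    unfolding winning_shift_def using full by (auto intro!: exI[of _ "\<lambda>_. A"])
qed

lemma infinite_coding_dimension_const:
  assumes "(\<lambda>_. c) \<in> W" "0 < c"
  shows "infinite_coding_dimension W"
  unfolding infinite_coding_dimension_def
proof
  fix d :: nat
  have "Suc d * 1 \<le> Suc d * c" using assms(2) by (intro mult_le_mono2) simp
  then have "d < Suc d * c" by simp
  then show "\<exists>y\<in>W. \<exists>n. d < (\<Sum>i<n. y i)"
    using assms(1) by (intro bexI[of _ "\<lambda>_. c"] exI[of _ "Suc d"]) auto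
qed


fun bin_val :: "nat list \<Rightarrow> nat" where
  "bin_val [] = 0"
| "bin_val (x # xs) = x * 2 ^ length xs + bin_val xs"

lemma bin_val_append: "bin_val (xs @ ys) = bin_val xs * 2 ^ length ys + bin_val ys"
  by (induction xs) (auto simp: algebra_simps power_add)

lemma bin_val_replicate_0 [simp]: "bin_val (replicate k 0) = 0"
  by (induction k) auto

lemma bin_val_less: "set xs \<subseteq> {0, 1} \<Longrightarrow> bin_val xs < 2 ^ length xs"
proof (induction xs)
  case (Cons x xs)
  then have "x * 2 ^ length xs + bin_val xs < 2 ^ length xs + 2 ^ length xs"
    by (intro add_le_less_mono) auto
  then show ?case by simp
qed simp

lemma bin_val_power_of_two: "sum_list xs = 1 \<Longrightarrow> \<exists>j. bin_val xs = 2 ^ j"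
proof (induction xs)
  case (Cons x xs)
  show ?case
  proof (cases x)
    case 0
    with Cons show ?thesis by simp
  next
    case (Suc y)
    then have "x = 1" "sum_list xs = 0" using Cons.prems by auto
    moreover have "bin_val xs = 0"
      using \<open>sum_list xs = 0\<close> by (induction xs) auto
    ultimately show ?thesis by auto
  qed
qed simp

lemma bin_val_one_hot:
  "p < n \<Longrightarrow> bin_val ((replicate n 0)[p := 1]) = 2 ^ (n - Suc p)"
  by (simp add: upd_conv_take_nth_drop bin_val_append)

lemma mult_add_le_iff_lex:
  fixes a b x y n :: nat
  assumes "x < n" "y < n"
  shows "a * n + x \<le> b * n + y \<longleftrightarrow> a < b \<or> (a = b \<and> x \<le> y)"
proof -
  have less: "c * n + z < d * n" if "c < d" "z < n" for c d z :: nat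
  proof -
    have "c * n + z < Suc c * n" using that(2) by simp
    also have "\<dots> \<le> d * n" using that(1) by (intro mult_le_mono1) simp
    finally show ?thesis .
  qed
  show ?thesis
    using less[of a b x] less[of b a y] assms by (cases a b rule: linorder_cases) auto
qed

lemma mult_add_less_iff_lex:
  fixes a b x y n :: nat
  assumes "x < n" "y < n"
  shows "a * n + x < b * n + y \<longleftrightarrow> a < b \<or> (a = b \<and> x < y)"
  using mult_add_le_iff_lex[OF assms(2,1), of b a] by auto

lemma mult_add_eq_iff_lex:
  fixes a b x y n :: nat
  assumes "x < n" "y < n"
  shows "a * n + x = b * n + y \<longleftrightarrow> a = b \<and> x = y"
proof
  assume "a * n + x = b * n + y"
  then show "a = b \<and> x = y"
    using mult_add_le_iff_lex[OF assms, of a b] mult_add_le_iff_lex[OF assms(2,1), of b a] by auto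
qed simp

lemma bin_val_inj:
  "length xs = length ys \<Longrightarrow> set xs \<subseteq> {0, 1} \<Longrightarrow> set ys \<subseteq> {0, 1} \<Longrightarrow>
    bin_val xs = bin_val ys \<Longrightarrow> xs = ys"
proof (induction xs ys rule: list_induct2)
  case (Cons x xs y ys)
  have "bin_val xs < 2 ^ length ys" "bin_val ys < 2 ^ length ys"
    using Cons.hyps Cons.prems bin_val_less by fastforce+
  then have "x = y \<and> bin_val xs = bin_val ys"
    using Cons.prems(3) Cons.hyps(1) mult_add_eq_iff_lex by simp
  with Cons show ?case by auto
qed simp

definition track_bit :: "nat \<Rightarrow> nat" where
  "track_bit c = c mod 2"

definition mark_bit :: "nat \<Rightarrow> nat" where
  "mark_bit c = c div 2"

definition track_val :: "nat list \<Rightarrow> nat" where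
  "track_val w = bin_val (map track_bit w)"

definition mark_val :: "nat list \<Rightarrow> nat" where
  "mark_val w = bin_val (map mark_bit w)"

definition marked_key :: "nat list \<Rightarrow> nat" where
  "marked_key w = (2 ^ length w + track_val w) * 2 ^ length w + mark_val w"

definition marked_words :: "nat list set" where
  "marked_words = {w \<in> lists {0..3}. sum_list (map mark_bit w) = 1}"

lemma track_bits_binary: "set (map track_bit w) \<subseteq> {0, 1}"
  by (auto simp: track_bit_def)

lemma mark_bits_binary: "w \<in> lists {0..3} \<Longrightarrow> set (map mark_bit w) \<subseteq> {0, 1}"
  by (auto simp: mark_bit_def)

lemma track_val_less: "track_val w < 2 ^ length w"
  unfolding track_val_def using bin_val_less[OF track_bits_binary] by simp

lemma mark_val_less: "w \<in> lists {0..3} \<Longrightarrow> mark_val w < 2 ^ length w"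
  unfolding mark_val_def using bin_val_less[OF mark_bits_binary] by simp

lemma marked_key_bounds:
  assumes "w \<in> lists {0..3}"
  shows "2 ^ (2 * length w) \<le> marked_key w" "marked_key w < 2 ^ (2 * length w + 1)"
proof -
  let ?N = "2 ^ length w :: nat"
  have sq: "2 ^ (2 * length w) = ?N * ?N" by (simp add: mult_2 power_add)
  then show "2 ^ (2 * length w) \<le> marked_key w"
    by (simp add: marked_key_def algebra_simps)
  have "marked_key w < (?N + track_val w) * ?N + ?N"
    using mark_val_less[OF assms] by (simp add: marked_key_def)
  also have "\<dots> = (?N + Suc (track_val w)) * ?N" by simp
  also have "\<dots> \<le> (?N + ?N) * ?N" using track_val_less[of w] by (intro mult_le_mono1) simp
  also have "\<dots> = 2 ^ (2 * length w + 1)" by (simp add: sq)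
  finally show "marked_key w < 2 ^ (2 * length w + 1)" .
qed

lemma marked_key_less_if_shorter:
  assumes "u \<in> lists {0..3}" "v \<in> lists {0..3}" "length u < length v"
  shows "marked_key u < marked_key v"
proof -
  have "marked_key u < 2 ^ (2 * length u + 1)" using marked_key_bounds(2)[OF assms(1)] .
  also have "\<dots> \<le> 2 ^ (2 * length v)" using assms(3) by (intro power_increasing) auto
  also have "\<dots> \<le> marked_key v" using marked_key_bounds(1)[OF assms(2)] .
  finally show ?thesis .
qed

lemma length_le_if_marked_key_le:
  assumes "u \<in> lists {0..3}" "v \<in> lists {0..3}" "marked_key u \<le> marked_key v"
  shows "length u \<le> length v"
  using marked_key_less_if_shorter[OF assms(2,1)] assms(3) by linarith

lemma length_eq_if_marked_key_between:
  assumes "u \<in> lists {0..3}" "v \<in> lists {0..3}" "w \<in> lists {0..3}" "length u = length w"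
    and "marked_key u \<le> marked_key v" "marked_key v \<le> marked_key w"
  shows "length v = length w"
  using length_le_if_marked_key_le[OF assms(1,2,5)] length_le_if_marked_key_le[OF assms(2,3,6)]
    assms(4) by simp

lemma marked_key_le_iff_same_length:
  assumes "length u = length v" "u \<in> lists {0..3}" "v \<in> lists {0..3}"
  shows "marked_key u \<le> marked_key v \<longleftrightarrow>
    track_val u < track_val v \<or> (track_val u = track_val v \<and> mark_val u \<le> mark_val v)"
proof -
  have "mark_val u < 2 ^ length v" "mark_val v < 2 ^ length v"
    using mark_val_less[OF assms(2)] mark_val_less[OF assms(3)] unfolding assms(1) .
  then show ?thesis
    unfolding marked_key_def assms(1) by (simp add: mult_add_le_iff_lex)
qed

lemma inj_on_marked_key: "inj_on marked_key (lists {0..3})"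
proof (rule inj_onI)
  fix u v assume u: "u \<in> lists {0..3}" and v: "v \<in> lists {0..3}"
    and eq: "marked_key u = marked_key v"
  have len: "length u = length v"
    using length_le_if_marked_key_le[OF u v] length_le_if_marked_key_le[OF v u] eq by simp
  have "track_val u = track_val v \<and> mark_val u = mark_val v"
    using eq mark_val_less[OF u] mark_val_less[OF v]
    unfolding marked_key_def len by (simp add: mult_add_eq_iff_lex)
  then have bits: "map track_bit u = map track_bit v" "map mark_bit u = map mark_bit v"
    using bin_val_inj[OF _ track_bits_binary track_bits_binary, of u v]
      bin_val_inj[OF _ mark_bits_binary[OF u] mark_bits_binary[OF v]] len
    unfolding track_val_def mark_val_def by auto
  have letter: "c = track_bit c + 2 * mark_bit c" for c
    by (simp add: track_bit_def mark_bit_def)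
  show "u = v"
  proof (rule nth_equalityI)
    fix i assume "i < length u"
    then have "track_bit (u ! i) = track_bit (v ! i)" "mark_bit (u ! i) = mark_bit (v ! i)"
      using bits len by (metis nth_map)+
    then show "u ! i = v ! i" by (metis letter)
  qed (rule len)
qed

lemma infinite_marked_words: "infinite marked_words"
proof -
  have "inj (\<lambda>n. 2 # replicate n 0 :: nat list)" by (auto simp: inj_on_def)
  moreover have "range (\<lambda>n. 2 # replicate n 0) \<subseteq> marked_words"
    by (auto simp: marked_words_def mark_bit_def)
  ultimately show ?thesis
    using infinite_UNIV_nat finite_imageD finite_subset by blast
qed

abbreviation marked_less :: "nat list \<Rightarrow> nat list \<Rightarrow> bool" where
  "marked_less v w \<equiv> marked_key v < marked_key w"

interpretation marked: key_ordered_language marked_key marked_words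
proof
  show "inj_on marked_key marked_words"
    by (rule inj_on_subset[OF inj_on_marked_key]) (auto simp: marked_words_def)
qed (rule infinite_marked_words)


definition mark_at :: "nat list \<Rightarrow> nat \<Rightarrow> nat list" where
  "mark_at b p = b[p := b ! p + 2]"

context
  fixes b :: "nat list" and p :: nat
  assumes binary: "set b \<subseteq> {0, 1}" and p: "p < length b"
begin

lemma binary_nth: "b ! p \<in> {0, 1}"
  using binary nth_mem[OF p] by blast

lemma length_mark_at: "length (mark_at b p) = length b"
  by (simp add: mark_at_def)

lemma track_val_mark_at: "track_val (mark_at b p) = bin_val b"
proof -
  have "map track_bit b = b"
    by (rule map_idI) (use binary in \<open>auto simp: track_bit_def\<close>)
  moreover have "track_bit (b ! p + 2) = b ! p"
    using binary_nth by (auto simp: track_bit_def)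
  ultimately show ?thesis
    by (simp add: track_val_def mark_at_def map_update)
qed

lemma map_mark_bit_mark_at: "map mark_bit (mark_at b p) = (replicate (length b) 0)[p := 1]"
proof -
  have "map mark_bit b = map (\<lambda>_. 0) b"
    by (rule map_cong) (use binary in \<open>auto simp: mark_bit_def\<close>)
  moreover have "mark_bit (b ! p + 2) = 1"
    using binary_nth by (auto simp: mark_bit_def)
  ultimately show ?thesis
    by (simp add: mark_at_def map_update map_replicate_const)
qed

lemma mark_at_in_marked_words: "mark_at b p \<in> marked_words"
proof -
  have "set (mark_at b p) \<subseteq> insert (b ! p + 2) (set b)"
    unfolding mark_at_def by (rule set_update_subset_insert)
  also have "\<dots> \<subseteq> {0..3}" using binary binary_nth by auto
  finally have "set (mark_at b p) \<subseteq> {0..3}" .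
  then show ?thesis
    using p by (simp add: marked_words_def lists_eq_set map_mark_bit_mark_at sum_list_update)
qed

lemma marked_key_mark_at:
  "marked_key (mark_at b p) = (2 ^ length b + bin_val b) * 2 ^ length b + 2 ^ (length b - Suc p)"
  by (simp only: marked_key_def length_mark_at track_val_mark_at mark_val_def
      map_mark_bit_mark_at bin_val_one_hot[OF p])

end

lemma no_marked_word_between:
  assumes binary: "set b \<subseteq> {0, 1}" and p: "Suc p < length b"
  shows "\<not> (\<exists>v\<in>marked_words.
    marked_key (mark_at b (Suc p)) < marked_key v \<and> marked_key v < marked_key (mark_at b p))"
proof
  let ?n = "length b" and ?T = "2 ^ length b + bin_val b"
  assume "\<exists>v\<in>marked_words. marked_key (mark_at b (Suc p)) < marked_key v \<and>
    marked_key v < marked_key (mark_at b p)"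
  then obtain v where v: "v \<in> marked_words"
    and lo: "marked_key (mark_at b (Suc p)) < marked_key v"
    and hi: "marked_key v < marked_key (mark_at b p)" by blast
  define q where "q = ?n - Suc (Suc p)"
  have v_lists: "v \<in> lists {0..3}" using v by (simp add: marked_words_def)
  have "mark_at b p \<in> lists {0..3}" "mark_at b (Suc p) \<in> lists {0..3}"
    using mark_at_in_marked_words[OF binary] p by (simp_all add: marked_words_def)
  then have len: "length v = ?n"
    using length_eq_if_marked_key_between[OF _ v_lists, of "mark_at b (Suc p)" "mark_at b p"] lo hi
    by (simp add: mark_at_def)
  have q: "?n - Suc p = Suc q" using p by (simp add: q_def)
  have N: "2 ^ Suc q \<le> (2::nat) ^ ?n" using q by (intro power_increasing) auto
  have "2 ^ q < (2::nat) ^ Suc q" by simp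
  with N have small: "2 ^ q < (2::nat) ^ ?n" by linarith
  have mv: "mark_val v < 2 ^ ?n" using mark_val_less[OF v_lists] len by simp
  have "?T * 2 ^ ?n + 2 ^ q < (2 ^ ?n + track_val v) * 2 ^ ?n + mark_val v"
    using lo marked_key_mark_at[OF binary p] by (simp add: marked_key_def len q_def)
  then have lo': "?T < 2 ^ ?n + track_val v \<or> ?T = 2 ^ ?n + track_val v \<and> 2 ^ q < mark_val v"
    using mult_add_less_iff_lex[OF small mv] by simp
  have hi': "(2 ^ ?n + track_val v) * 2 ^ ?n + mark_val v < ?T * 2 ^ ?n + 2 ^ Suc q"
    using hi marked_key_mark_at[OF binary] p q by (simp add: marked_key_def len)
  then have "(2 ^ ?n + track_val v) * 2 ^ ?n < Suc ?T * 2 ^ ?n"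
    using N by simp
  then have "2 ^ ?n + track_val v < Suc ?T" by (simp only: mult_less_cancel2)
  then have "2 ^ q < mark_val v" "mark_val v < 2 ^ Suc q"
    using lo' hi' by auto
  obtain j where j: "mark_val v = 2 ^ j"
    using v bin_val_power_of_two by (auto simp: marked_words_def mark_val_def)
  have exp_less_iff: "(2::nat) ^ x < 2 ^ y \<longleftrightarrow> x < y" for x y by simp
  have "q < j" "j < Suc q"
    using \<open>2 ^ q < mark_val v\<close> \<open>mark_val v < 2 ^ Suc q\<close> unfolding j exp_less_iff .
  then show False by simp
qed

text \<open>State \<open>0\<close>: no mark read yet; state \<open>1 + t\<close>: the mark carried track bit \<open>t\<close>.\<close>

definition mark_reader :: "nat \<Rightarrow> nat \<Rightarrow> nat" where
  "mark_reader q c = (if q = 0 \<and> 2 \<le> c then 1 + c mod 2 else q)"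

definition marked_track_bit :: "nat \<Rightarrow> nat" where
  "marked_track_bit n = (if foldl mark_reader 0 (marked.enum n) = 2 then 1 else 0)"

lemma foldl_mark_reader_unmarked: "set xs \<subseteq> {0, 1} \<Longrightarrow> foldl mark_reader 0 xs = 0"
  by (induction xs) (auto simp: mark_reader_def)

lemma foldl_mark_reader_marked: "q \<noteq> 0 \<Longrightarrow> foldl mark_reader q xs = q"
  by (induction xs) (auto simp: mark_reader_def)

lemma marked_track_bit_mark_at:
  assumes binary: "set b \<subseteq> {0, 1}" and p: "p < length b" and i: "marked.enum i = mark_at b p"
  shows "marked_track_bit i = b ! p"
proof -
  have bp: "b ! p \<in> {0, 1}" using binary nth_mem[OF p] by blast
  have "set (take p b) \<subseteq> {0, 1}" using set_take_subset binary by (rule order.trans)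
  then have "foldl mark_reader 0 (take p b) = 0" by (rule foldl_mark_reader_unmarked)
  moreover have "mark_at b p = take p b @ (b ! p + 2) # drop (Suc p) b"
    using p by (simp add: mark_at_def upd_conv_take_nth_drop)
  moreover have "mark_reader 0 (b ! p + 2) = 1 + b ! p"
    using bp by (auto simp: mark_reader_def)
  ultimately have "foldl mark_reader 0 (mark_at b p) = 1 + b ! p"
    by (simp add: foldl_mark_reader_marked)
  then show ?thesis using i bp by (auto simp: marked_track_bit_def)
qed

lemma enum_mark_at_consecutive:
  assumes binary: "set b \<subseteq> {0, 1}" and K: "marked.enum K = mark_at b (length b - 1)"
  shows "j < length b \<Longrightarrow> marked.enum (K + j) = mark_at b (length b - 1 - j)"
proof (induction j)
  case 0
  with K show ?case by simp
next
  case (Suc j)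
  define p where "p = length b - Suc (Suc j)"
  have p: "Suc p < length b" "length b - 1 - j = Suc p" using Suc.prems by (auto simp: p_def)
  have "marked_key (mark_at b (Suc p)) < marked_key (mark_at b p)"
    using marked_key_mark_at[OF binary] p by (simp add: Suc_diff_Suc)
  moreover have "marked.enum (K + j) = mark_at b (Suc p)"
    using Suc p by simp
  ultimately have "marked.enum (Suc (K + j)) = mark_at b p"
    using marked.enum_Suc_if_no_key_between mark_at_in_marked_words[OF binary]
      no_marked_word_between[OF binary p(1)] p(1) by simp
  then show ?case by (simp add: p_def)
qed

lemma binary_factor_of_marked_track_bit:
  assumes "set s \<subseteq> {0, 1}"
  shows "\<exists>K. \<forall>j<length s. marked_track_bit (K + j) = s ! j"
proof (cases "s = []")
  case False
  let ?b = "rev s"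
  have binary: "set ?b \<subseteq> {0, 1}" using assms by simp
  have "length ?b - 1 < length ?b" using False by simp
  then obtain K where K: "marked.enum K = mark_at ?b (length ?b - 1)"
    using marked.enum_surj mark_at_in_marked_words[OF binary] by blast
  have "marked_track_bit (K + j) = s ! j" if "j < length s" for j
    using marked_track_bit_mark_at[OF binary _ enum_mark_at_consecutive[OF binary K]] that
    by (simp add: rev_nth)
  then show ?thesis by blast
qed simp

definition cmp_code :: "nat \<Rightarrow> nat \<Rightarrow> nat" where
  "cmp_code x y = (if x < y then 1 else if y < x then 2 else 0)"

text \<open>Reading binary numbers from the most significant digit, the first difference decides
  the comparison, so a strict outcome is never revised.\<close>

definition refine_cmp :: "nat \<Rightarrow> nat \<Rightarrow> nat \<Rightarrow> nat" where
  "refine_cmp c x y = (if c = 0 then cmp_code x y else c)"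

lemma cmp_code_le: "cmp_code x y \<le> 2"
  by (simp add: cmp_code_def)

lemma refine_cmp_le: "c \<le> 2 \<Longrightarrow> refine_cmp c x y \<le> 2"
  by (simp add: refine_cmp_def cmp_code_le)

lemma refine_cmp_mult_add:
  assumes "x' < n" "y' < n"
  shows "refine_cmp (refine_cmp c x y) x' y' = refine_cmp c (x * n + x') (y * n + y')"
  using mult_add_less_iff_lex[OF assms, of x y] mult_add_less_iff_lex[OF assms(2,1), of y x]
  unfolding refine_cmp_def cmp_code_def by auto

text \<open>The comparison automaton reads the two padded representations in parallel.
  Its state records the phase (\<open>0\<close>: start, \<open>1\<close>: inside the padding of the first
  component, \<open>2\<close>: digits after padding, \<open>3\<close>: digits without padding, \<open>4\<close>: dead),
  the number of marks read in each component (saturated at \<open>2\<close>), and the comparisons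
  of the tracks and of the marks.\<close>

definition phase_digit :: "nat \<Rightarrow> nat" where
  "phase_digit ph = (if ph = 0 \<or> ph = 3 then 3 else if ph = 1 \<or> ph = 2 then 2 else 4)"

definition phase_pad :: "nat \<Rightarrow> nat" where
  "phase_pad ph = (if ph \<le> 1 then 1 else 4)"

type_synonym cmp_state = "nat \<times> nat \<times> nat \<times> nat \<times> nat"

fun cmp_step :: "cmp_state \<Rightarrow> nat option \<times> nat option \<Rightarrow> cmp_state" where
  "cmp_step s (a, None) = (4, 0, 0, 0, 0)"
| "cmp_step (ph, cu, cv, ct, cm) (None, Some b) =
    (phase_pad ph, cu, min 2 (cv + mark_bit b), ct, cm)"
| "cmp_step (ph, cu, cv, ct, cm) (Some a, Some b) =
    (phase_digit ph, min 2 (cu + mark_bit a), min 2 (cv + mark_bit b),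
     refine_cmp ct (track_bit a) (track_bit b), refine_cmp cm (mark_bit a) (mark_bit b))"

definition cmp_states :: "cmp_state set" where
  "cmp_states = {0..4} \<times> {0..2} \<times> {0..2} \<times> {0..2} \<times> {0..2}"

definition cmp_final :: "cmp_state set" where
  "cmp_final = {(ph, cu, cv, ct, cm) \<in> cmp_states.
     cu = 1 \<and> cv = 1 \<and> (ph = 2 \<or> ph = 3 \<and> (ct = 1 \<or> ct = 0 \<and> cm \<noteq> 2))}"

definition pair_letter :: "nat option \<times> nat option \<Rightarrow> nat option list" where
  "pair_letter z = [fst z, snd z]"

definition letter_pairs :: "(nat option \<times> nat option) set" where
  "letter_pairs = insert None (Some ` {0..3}) \<times> Some ` {0..3}"

definition cmp_delta :: "cmp_state \<Rightarrow> nat option list \<Rightarrow> cmp_state" where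
  "cmp_delta s l = cmp_step s (l ! 0, l ! 1)"

lemma foldl_cmp_delta: "foldl cmp_delta s (map pair_letter zs) = foldl cmp_step s zs"
  by (induction zs arbitrary: s) (auto simp: cmp_delta_def pair_letter_def)

lemma cmp_step_in_cmp_states:
  assumes "s \<in> cmp_states"
  shows "cmp_step s (a, b) \<in> cmp_states"
  using assms by (cases s rule: prod_cases5; cases a; cases b)
    (auto simp: cmp_states_def phase_pad_def phase_digit_def refine_cmp_le)

lemma min_min_add: "min c (min c a + s) = min c (a + s :: nat)"
  by auto

lemma foldl_cmp_step_digits:
  assumes "length u = length v" "u \<in> lists {0..3}" "v \<in> lists {0..3}"
  shows "cu \<le> 2 \<Longrightarrow> cv \<le> 2 \<Longrightarrow>
    foldl cmp_step (ph, cu, cv, ct, cm) (zip (map Some u) (map Some v)) =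
    (if u = [] then ph else phase_digit ph, min 2 (cu + sum_list (map mark_bit u)),
     min 2 (cv + sum_list (map mark_bit v)),
     refine_cmp ct (track_val u) (track_val v), refine_cmp cm (mark_val u) (mark_val v))"
  using assms
proof (induction u v arbitrary: ph cu cv ct cm rule: list_induct2)
  case Nil
  then show ?case by (simp add: track_val_def mark_val_def refine_cmp_def cmp_code_def)
next
  case (Cons x xs y ys)
  have lists: "xs \<in> lists {0..3}" "ys \<in> lists {0..3}" using Cons.prems by auto
  have phase: "phase_digit (phase_digit ph) = phase_digit ph"
    by (simp add: phase_digit_def)
  have "refine_cmp (refine_cmp ct (track_bit x) (track_bit y)) (track_val xs) (track_val ys) =
      refine_cmp ct (track_val (x # xs)) (track_val (y # ys))"
    using track_val_less[of xs] track_val_less[of ys] Cons.hyps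
    by (simp add: refine_cmp_mult_add track_val_def)
  moreover have "refine_cmp (refine_cmp cm (mark_bit x) (mark_bit y)) (mark_val xs) (mark_val ys) =
      refine_cmp cm (mark_val (x # xs)) (mark_val (y # ys))"
    using mark_val_less[OF lists(1)] mark_val_less[OF lists(2)] Cons.hyps
    by (simp add: refine_cmp_mult_add mark_val_def)
  ultimately show ?case
    using Cons.IH[OF _ _ lists] phase by (simp add: min_min_add flip: add.assoc)
qed

lemma foldl_cmp_step_padding:
  "length v = k \<Longrightarrow> cv \<le> 2 \<Longrightarrow>
    foldl cmp_step (ph, cu, cv, ct, cm) (zip (replicate k None) (map Some v)) =
    (if k = 0 then ph else phase_pad ph, cu, min 2 (cv + sum_list (map mark_bit v)), ct, cm)"
proof (induction v arbitrary: k ph cv)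
  case (Cons y ys)
  then obtain k' where "k = Suc k'" "length ys = k'" by auto
  with Cons.IH[where k = k' and ph = "phase_pad ph" and cv = "min 2 (cv + mark_bit y)"]
  show ?case
    by (simp add: phase_pad_def min_min_add flip: add.assoc)
qed simp

lemma foldl_cmp_step_padded:
  assumes "u \<in> lists {0..3}" "v \<in> lists {0..3}" "length v = k + length u"
  shows "foldl cmp_step (0, 0, 0, 0, 0) (zip (replicate k None @ map Some u) (map Some v)) =
    (if u = [] then (if k = 0 then 0 else 1) else (if k = 0 then 3 else 2),
     min 2 (sum_list (map mark_bit u)), min 2 (sum_list (map mark_bit v)),
     cmp_code (track_val u) (track_val (drop k v)), cmp_code (mark_val u) (mark_val (drop k v)))"
proof -
  let ?v1 = "take k v" and ?v2 = "drop k v"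
  have "map Some v = map Some ?v1 @ map Some ?v2"
    by (simp flip: map_append)
  then have split: "zip (replicate k None @ map Some u) (map Some v) =
      zip (replicate k None) (map Some ?v1) @ zip (map Some u) (map Some ?v2)"
    using assms(3) by (simp add: zip_append)
  have sum: "sum_list (map mark_bit v) = sum_list (map mark_bit ?v1) + sum_list (map mark_bit ?v2)"
    by (metis append_take_drop_id map_append sum_list_append)
  let ?ph = "if k = 0 then 0 else 1 :: nat" and ?s1 = "min 2 (sum_list (map mark_bit ?v1))"
  have "length ?v1 = k" using assms(3) by simp
  then have pad: "foldl cmp_step (0, 0, 0, 0, 0) (zip (replicate k None) (map Some ?v1)) =
      (?ph, 0, ?s1, 0, 0)"
    by (simp add: foldl_cmp_step_padding phase_pad_def)
  have "?v2 \<in> lists {0..3}" using assms(2) by (auto dest: in_set_dropD)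
  with assms(1,3) have "foldl cmp_step (?ph, 0, ?s1, 0, 0) (zip (map Some u) (map Some ?v2)) =
      (if u = [] then ?ph else phase_digit ?ph, min 2 (0 + sum_list (map mark_bit u)),
       min 2 (?s1 + sum_list (map mark_bit ?v2)),
       refine_cmp 0 (track_val u) (track_val ?v2), refine_cmp 0 (mark_val u) (mark_val ?v2))"
    by (intro foldl_cmp_step_digits) auto
  then show ?thesis
    unfolding split foldl_append pad
    by (simp add: sum min_min_add phase_digit_def refine_cmp_def)
qed

lemma mem_cmp_final_iff:
  "(ph, cu, cv, ct, cm) \<in> cmp_final \<longleftrightarrow>
    cu = 1 \<and> cv = 1 \<and> ct \<le> 2 \<and> cm \<le> 2 \<and> (ph = 2 \<or> ph = 3 \<and> (ct = 1 \<or> ct = 0 \<and> cm \<noteq> 2))"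
  by (auto simp: cmp_final_def cmp_states_def)

lemma cmp_code_lex_iff:
  "cmp_code a b = 1 \<or> cmp_code a b = 0 \<and> cmp_code x y \<noteq> 2 \<longleftrightarrow> a < b \<or> a = b \<and> x \<le> y"
  by (auto simp: cmp_code_def)

lemma padded_pair_accepted_iff:
  assumes u: "u \<in> lists {0..3}" and v: "v \<in> lists {0..3}" and k: "length v = k + length u"
  shows "foldl cmp_step (0, 0, 0, 0, 0) (zip (replicate k None @ map Some u) (map Some v)) \<in> cmp_final
    \<longleftrightarrow> u \<in> marked_words \<and> v \<in> marked_words \<and> marked_key u \<le> marked_key v"
proof -
  let ?su = "sum_list (map mark_bit u)" and ?sv = "sum_list (map mark_bit v)"
  have marked: "u \<in> marked_words \<longleftrightarrow> ?su = 1" "v \<in> marked_words \<longleftrightarrow> ?sv = 1"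
    using u v by (simp_all add: marked_words_def)
  have min_eq_1: "min 2 s = 1 \<longleftrightarrow> s = 1" for s :: nat by auto
  have nonempty: "?su = 1 \<Longrightarrow> u \<noteq> []" by auto
  show ?thesis
  proof (cases "k = 0")
    case True
    then have "length u = length v" using k by simp
    then have "marked_key u \<le> marked_key v \<longleftrightarrow> cmp_code (track_val u) (track_val v) = 1 \<or>
        cmp_code (track_val u) (track_val v) = 0 \<and> cmp_code (mark_val u) (mark_val v) \<noteq> 2"
      using marked_key_le_iff_same_length[OF _ u v] cmp_code_lex_iff by simp
    with True show ?thesis
      unfolding foldl_cmp_step_padded[OF u v k] mem_cmp_final_iff marked min_eq_1
      using nonempty cmp_code_le by auto
  next
    case False
    then have "marked_key u < marked_key v"
      using marked_key_less_if_shorter[OF u v] k by simp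
    with False show ?thesis
      unfolding foldl_cmp_step_padded[OF u v k] mem_cmp_final_iff marked min_eq_1
      using nonempty cmp_code_le by auto
  qed
qed


lemma fst_cmp_step_Some:
  "fst (cmp_step s (a, Some b)) = (case a of None \<Rightarrow> phase_pad (fst s) | Some _ \<Rightarrow> phase_digit (fst s))"
  by (cases s rule: prod_cases5; cases a) auto

lemma padding_if_phase_le_1:
  "\<forall>z\<in>set zs. snd z \<noteq> None \<Longrightarrow> fst (foldl cmp_step (0, 0, 0, 0, 0) zs) \<le> 1 \<Longrightarrow>
    \<forall>z\<in>set zs. fst z = None"
proof (induction zs rule: rev_induct)
  case (snoc z zs)
  obtain a b where z: "z = (a, Some b)" using snoc.prems by (cases z) auto
  have "fst (cmp_step (foldl cmp_step (0, 0, 0, 0, 0) zs) (a, Some b)) \<le> 1"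
    using snoc.prems z by simp
  then have "a = None \<and> fst (foldl cmp_step (0, 0, 0, 0, 0) zs) \<le> 1"
    by (cases a) (auto simp: fst_cmp_step_Some phase_pad_def phase_digit_def split: if_splits)
  with snoc z show ?case by auto
qed simp

lemma padded_shape_if_phase_2_3:
  "\<forall>z\<in>set zs. snd z \<noteq> None \<Longrightarrow> fst (foldl cmp_step (0, 0, 0, 0, 0) zs) \<in> {2, 3} \<Longrightarrow>
    \<exists>k u. map fst zs = replicate k None @ map Some u"
proof (induction zs rule: rev_induct)
  case (snoc z zs)
  let ?ph = "fst (foldl cmp_step (0, 0, 0, 0, 0) zs)"
  obtain a b where z: "z = (a, Some b)" using snoc.prems by (cases z) auto
  have ph: "fst (cmp_step (foldl cmp_step (0, 0, 0, 0, 0) zs) (a, Some b)) \<in> {2, 3}"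
    using snoc.prems z by simp
  then obtain a' where a: "a = Some a'"
    by (cases a) (auto simp: fst_cmp_step_Some phase_pad_def split: if_splits)
  with ph have "?ph \<le> 3" by (auto simp: fst_cmp_step_Some phase_digit_def split: if_splits)
  show ?case
  proof (cases "?ph \<le> 1")
    case True
    moreover have "\<forall>z\<in>set zs. snd z \<noteq> None" using snoc.prems(1) by simp
    ultimately have "\<forall>z\<in>set zs. fst z = None" by (rule_tac padding_if_phase_le_1) simp_all
    then have "map fst zs = replicate (length zs) None"
      by (simp add: map_replicate_const[symmetric] cong: map_cong)
    then show ?thesis using z a by (intro exI[of _ "length zs"] exI[of _ "[a']"]) simp
  next
    case False
    then obtain k u where "map fst zs = replicate k None @ map Some u"
      using snoc \<open>?ph \<le> 3\<close> by fastforce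
    then show ?thesis using z a by (intro exI[of _ k] exI[of _ "u @ [a']"]) simp
  qed
qed simp

lemma letter_pairs_padded_shape:
  assumes zs: "zs \<in> lists letter_pairs" and shape: "map fst zs = replicate k None @ map Some u"
  obtains v where "zs = zip (replicate k None @ map Some u) (map Some v)"
    and "u \<in> lists {0..3}" "v \<in> lists {0..3}" "length v = k + length u"
proof
  let ?v = "map (the \<circ> snd) zs"
  have snd: "snd z \<in> Some ` {0..3}" if "z \<in> set zs" for z
    using zs that by (auto simp: letter_pairs_def)
  then have "map snd zs = map Some ?v" by (fastforce intro: map_cong)
  then show "zs = zip (replicate k None @ map Some u) (map Some ?v)"
    by (metis shape zip_map_fst_snd)
  show "?v \<in> lists {0..3}" using snd by fastforce
  show "length ?v = k + length u" using arg_cong[OF shape, of length] by simp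
  have "Some ` set u \<subseteq> fst ` set zs" using arg_cong[OF shape, of set] by auto
  also have "\<dots> \<subseteq> insert None (Some ` {0..3})" using zs by (auto simp: letter_pairs_def)
  finally show "u \<in> lists {0..3}" by auto
qed

lemma padded_pair_in_letter_pairs:
  assumes "u \<in> lists {0..3}" "v \<in> lists {0..3}"
  shows "zip (replicate k None @ map Some u) (map Some v) \<in> lists letter_pairs"
  using assms by (auto simp: letter_pairs_def elim!: in_set_zipE)

lemma rep_tuple_two:
  assumes "length (ans_rep Lang lt x) \<le> length (ans_rep Lang lt y)"
  shows "rep_tuple Lang lt [x, y] = map pair_letter
    (zip (pad_left (length (ans_rep Lang lt y)) (ans_rep Lang lt x)) (map Some (ans_rep Lang lt y)))"
proof -
  let ?u = "ans_rep Lang lt x" and ?v = "ans_rep Lang lt y"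
  have "length (pad_left (length ?v) ?u) = length ?v" "pad_left (length ?v) ?v = map Some ?v"
    using assms by (simp_all add: pad_left_def)
  then show ?thesis
    unfolding rep_tuple_def Let_def
    by (intro nth_equalityI) (auto simp: max_absorb2[OF assms] pair_letter_def)
qed

lemma rep_tuple_marked_pair:
  assumes "length (marked.enum x) \<le> length (marked.enum y)"
  shows "rep_tuple marked_words marked_less [x, y] = map pair_letter
    (zip (replicate (length (marked.enum y) - length (marked.enum x)) None @ map Some (marked.enum x))
      (map Some (marked.enum y)))"
  using rep_tuple_two[of marked_words marked_less x y] assms
  by (simp add: marked.ans_rep_eq_enum pad_left_def)

lemma rep_marked_le_pairs:
  "rep_tuple marked_words marked_less ` {[x, y] | x y. x \<le> y} =
    {W \<in> lists (pair_letter ` letter_pairs). foldl cmp_delta (0, 0, 0, 0, 0) W \<in> cmp_final}"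
proof (intro equalityI subsetI)
  fix W assume "W \<in> rep_tuple marked_words marked_less ` {[x, y] | x y. x \<le> y}"
  then obtain x y where "x \<le> y" and W: "W = rep_tuple marked_words marked_less [x, y]" by blast
  let ?u = "marked.enum x" and ?v = "marked.enum y"
  let ?k = "length ?v - length ?u"
  let ?zs = "zip (replicate ?k None @ map Some ?u) (map Some ?v)"
  have marked: "?u \<in> marked_words" "?v \<in> marked_words" "marked_key ?u \<le> marked_key ?v"
    using marked.enum_in \<open>x \<le> y\<close> marked.key_enum_le_iff by auto
  then have lists: "?u \<in> lists {0..3}" "?v \<in> lists {0..3}" by (simp_all add: marked_words_def)
  then have "length ?u \<le> length ?v" using length_le_if_marked_key_le marked(3) by blast
  then have k: "length ?v = ?k + length ?u" and W: "W = map pair_letter ?zs"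
    using W rep_tuple_marked_pair by simp_all
  have "?zs \<in> lists letter_pairs" using padded_pair_in_letter_pairs[OF lists] .
  moreover have "foldl cmp_step (0, 0, 0, 0, 0) ?zs \<in> cmp_final"
    using padded_pair_accepted_iff[OF lists k] marked by simp
  ultimately show "W \<in> {W \<in> lists (pair_letter ` letter_pairs). foldl cmp_delta (0, 0, 0, 0, 0) W \<in> cmp_final}"
    unfolding W by (auto simp: foldl_cmp_delta)
next
  fix W assume "W \<in> {W \<in> lists (pair_letter ` letter_pairs). foldl cmp_delta (0, 0, 0, 0, 0) W \<in> cmp_final}"
  then have "W \<in> map pair_letter ` lists letter_pairs"
    and accW: "foldl cmp_delta (0, 0, 0, 0, 0) W \<in> cmp_final"
    by (simp_all add: lists_image)
  then obtain zs where zs: "zs \<in> lists letter_pairs" and W: "W = map pair_letter zs"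
    by blast
  have acc: "foldl cmp_step (0, 0, 0, 0, 0) zs \<in> cmp_final"
    using accW unfolding W foldl_cmp_delta .
  have "\<forall>z\<in>set zs. snd z \<noteq> None" using zs by (auto simp: letter_pairs_def)
  moreover have "fst (foldl cmp_step (0, 0, 0, 0, 0) zs) \<in> {2, 3}"
    using acc by (auto simp: cmp_final_def)
  ultimately obtain k u where "map fst zs = replicate k None @ map Some u"
    using padded_shape_if_phase_2_3 by blast
  then obtain v where zs_eq: "zs = zip (replicate k None @ map Some u) (map Some v)"
    and lists: "u \<in> lists {0..3}" "v \<in> lists {0..3}" and k: "length v = k + length u"
    using letter_pairs_padded_shape[OF zs] by blast
  have "u \<in> marked_words" "v \<in> marked_words" and le: "marked_key u \<le> marked_key v"
    using acc padded_pair_accepted_iff[OF lists k] unfolding zs_eq by simp_all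
  then obtain i j where i: "marked.enum i = u" and j: "marked.enum j = v"
    using marked.enum_surj by metis
  have "i \<le> j" using le unfolding i[symmetric] j[symmetric] marked.key_enum_le_iff .
  have "W = rep_tuple marked_words marked_less [i, j]"
    using rep_tuple_marked_pair[of i j] i j k W zs_eq by simp
  with \<open>i \<le> j\<close> show "W \<in> rep_tuple marked_words marked_less ` {[x, y] | x y. x \<le> y}" by blast
qed

lemma S_comparable_marked: "S_comparable marked_words marked_less"
  unfolding S_comparable_def S_recognizable_def rep_marked_le_pairs
proof (rule regular_lang_countable_dfa[OF _ _ _ _ _ refl])
  show "finite (pair_letter ` letter_pairs)" "finite cmp_states" "(0, 0, 0, 0, 0) \<in> cmp_states"
    "cmp_final \<subseteq> cmp_states"
    by (auto simp: letter_pairs_def cmp_states_def cmp_final_def)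
  show "\<forall>q\<in>cmp_states. \<forall>c\<in>pair_letter ` letter_pairs. cmp_delta q c \<in> cmp_states"
    by (auto simp: cmp_delta_def pair_letter_def cmp_step_in_cmp_states)
qed

lemma S_automatic_marked_track_bit: "S_automatic {0..3} marked_words marked_less marked_track_bit"
  unfolding S_automatic_def
proof (intro exI conjI)
  show "finite {0, 1, 2 :: nat}" "(0 :: nat) \<in> {0, 1, 2}"
    "\<forall>q\<in>{0, 1, 2}. \<forall>c\<in>{0..3}. mark_reader q c \<in> {0, 1, 2 :: nat}"
    by (auto simp: mark_reader_def)
  show "\<forall>n. marked_track_bit n = (\<lambda>q. if q = 2 then 1 else 0)
      (foldl mark_reader 0 (ans_rep marked_words marked_less n))"
    by (simp add: marked_track_bit_def marked.ans_rep_eq_enum)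
qed

lemma orbit_closure_marked_track_bit:
  assumes "range a \<subseteq> {0, 1}"
  shows "a \<in> orbit_closure marked_track_bit"
proof (rule in_orbit_closureI)
  fix M
  have "set (map a [0..<M]) \<subseteq> range a" by auto
  then have "set (map a [0..<M]) \<subseteq> {0, 1}" using assms by (rule order.trans)
  from binary_factor_of_marked_track_bit[OF this] obtain K
    where "\<forall>j<length (map a [0..<M]). marked_track_bit (K + j) = map a [0..<M] ! j" ..
  then show "\<exists>K. \<forall>j<M. marked_track_bit (K + j) = a j" by auto
qed

theorem mainTheorem9:
  shows "\<exists>(Alph :: nat set) (Lang :: nat list set) (lt :: nat list \<Rightarrow> nat list \<Rightarrow> bool)
            (x :: nat \<Rightarrow> nat) (A :: nat set).
           is_ANS Alph Lang lt \<and> S_comparable Lang lt \<and>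
           finite A \<and> range x \<subseteq> A \<and> S_automatic Alph Lang lt x \<and>
           infinite_coding_dimension (winning_shift A (orbit_closure x))"
proof -
  have "is_ANS {0..3} marked_words marked_less"
    by (rule marked.is_ANS_key_order) (auto simp: marked_words_def)
  moreover have "range marked_track_bit \<subseteq> {0, 1}"
    by (auto simp: marked_track_bit_def)
  moreover have "(\<lambda>_. 1) \<in> winning_shift {0, 1} (orbit_closure marked_track_bit)"
    using full_choice_in_winning_shift[of "{0, 1}" "orbit_closure marked_track_bit"]
      orbit_closure_marked_track_bit by simp
  then have "infinite_coding_dimension (winning_shift {0, 1} (orbit_closure marked_track_bit))"
    by (rule infinite_coding_dimension_const) simp
  ultimately show ?thesis
    using S_comparable_marked S_automatic_marked_track_bit
    by (intro exI[of _ "{0..3}"] exI[of _ marked_words] exI[of _ marked_less]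
        exI[of _ marked_track_bit] exI[of _ "{0, 1}"]) simp
qed

end
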